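(* Let $T$ be a $P$-Petri net, let $F\subseteq P$, let $\rho$ be a $(T,F)$-stabilized $P$-configuration, let $h$ be a positive integer with $h\geq\|T\|_\infty(1+\|T\|_\infty)^{|P|^{|P|}}$, and let $R=\{p\in P\mid\rho(p)<h\}$. Then every $P$-configuration $\alpha$ with $\alpha|_R\leq\rho|_R$ is $(T,F)$-stabilized.
   Context: A $P$-configuration is a map in $\mathbb{N}^P$; $\alpha\leq\beta$ means $\beta=\alpha+\rho$ for some configuration $\rho$ (componentwise order). For a finite set $R$, $\rho|_R$ is the $R$-configuration with $\rho|_R(q)=\rho(q)$ if $q\in P$ and $0$ otherwise. A $P$-Petri net $T$ is a finite set of pairs $t=(\alpha_t,\beta_t)$ of $P$-configurations; $\alpha\xrightarrow{t}\beta$ iff $\alpha=\alpha_t+\rho$, $\beta=\beta_t+\rho$ for some $\rho$; $\alpha\xrightarrow{T^*}\beta$ iff $\beta$ is reachable from $\alpha$ by a finite sequence of such steps with transitions in $T$. $\|T\|_\infty$ is the maximum entry of all $\alpha_t,\beta_t$ for $t\in T$. A $P$-configuration $\rho$ is $(T,F)$-stabilized if every $\beta$ with $\rho\xrightarrow{T^*}\beta$ satisfies $\beta(p)=0$ for all $p\in P\setminus F$. *)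

theory Defs
  imports Main
begin

type_synonym 'p config = "'p \<Rightarrow> nat"
type_synonym 'p transition = "'p config \<times> 'p config"

definition is_config :: "'p set \<Rightarrow> 'p config \<Rightarrow> bool" where
  "is_config P \<alpha> \<longleftrightarrow> (\<forall>q. q \<notin> P \<longrightarrow> \<alpha> q = 0)"

definition is_petri_net :: "'p set \<Rightarrow> 'p transition set \<Rightarrow> bool" where
  "is_petri_net P T \<longleftrightarrow> finite T \<and> (\<forall>t\<in>T. is_config P (fst t) \<and> is_config P (snd t))"

definition restr :: "'p set \<Rightarrow> 'p config \<Rightarrow> 'p config" where
  "restr R \<rho> = (\<lambda>q. if q \<in> R then \<rho> q else 0)"

definition fires :: "'p set \<Rightarrow> 'p transition \<Rightarrow> 'p config \<Rightarrow> 'p config \<Rightarrow> bool" where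
  "fires P t \<alpha> \<beta> \<longleftrightarrow> (\<exists>\<rho>. is_config P \<rho> \<and> (\<forall>q. \<alpha> q = fst t q + \<rho> q) \<and> (\<forall>q. \<beta> q = snd t q + \<rho> q))"

definition reach :: "'p set \<Rightarrow> 'p transition set \<Rightarrow> 'p config \<Rightarrow> 'p config \<Rightarrow> bool" where
  "reach P T = (\<lambda>\<alpha> \<beta>. \<exists>t\<in>T. fires P t \<alpha> \<beta>)\<^sup>*\<^sup>*"

definition norm_inf :: "'p set \<Rightarrow> 'p transition set \<Rightarrow> nat" where
  "norm_inf P T = Max (insert 0 ({fst t p | t p. t \<in> T \<and> p \<in> P} \<union> {snd t p | t p. t \<in> T \<and> p \<in> P}))"

definition stabilized :: "'p set \<Rightarrow> 'p transition set \<Rightarrow> 'p set \<Rightarrow> 'p config \<Rightarrow> bool" where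
  "stabilized P T F \<rho> \<longleftrightarrow> (\<forall>\<beta>. reach P T \<rho> \<beta> \<longrightarrow> (\<forall>p \<in> P - F. \<beta> p = 0))"

end

theory Submission
  imports Defs "HOL-Library.FuncSet"
begin

(* Suppose some beta reachable from alpha puts a token on a place p outside F.  As rho is
   stabilized, rho p = 0, hence p is in R.  Projected onto R, the run shows that p can be covered
   from alpha|R in the net that ignores the places outside R.  Rackoff's argument shortens such a
   covering run to at most rackoff_bound M |R| <= (1 + M)^(|P|^|P|) steps, where M = ||T||.
   Such a run removes at most h tokens from any place, so it can be replayed from rho, which
   dominates alpha on R and carries at least h tokens everywhere else.  Then p is covered from rho,
   contradicting the stabilization of rho. *)

definition net_step :: "'p set \<Rightarrow> 'p transition set \<Rightarrow> 'p config \<Rightarrow> 'p config \<Rightarrow> bool" where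
  "net_step P T \<alpha> \<beta> \<longleftrightarrow> (\<exists>t\<in>T. fires P t \<alpha> \<beta>)"

lemma reach_eq_rtranclp_net_step: "reach P T = (net_step P T)\<^sup>*\<^sup>*"
  unfolding reach_def net_step_def ..

(* The places outside S are forgotten; they behave as if they held unboundedly many tokens. *)
definition restr_net :: "'p set \<Rightarrow> 'p transition set \<Rightarrow> 'p transition set" where
  "restr_net S T = map_prod (restr S) (restr S) ` T"

definition fire_on :: "'p set \<Rightarrow> 'p transition \<Rightarrow> 'p config \<Rightarrow> 'p config" where
  "fire_on S t \<alpha> = restr S (\<lambda>q. \<alpha> q - fst t q + snd t q)"

lemma is_config_restr: "is_config S (restr S \<alpha>)"
  unfolding is_config_def restr_def by simp

lemma restr_eq_self: "is_config S \<alpha> \<Longrightarrow> restr S \<alpha> = \<alpha>"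
  unfolding is_config_def restr_def by auto

lemma restr_net_eq_self:
  assumes "is_petri_net P T"
  shows "restr_net P T = T"
proof -
  have "map_prod (restr P) (restr P) t = t" if "t \<in> T" for t
    using assms that unfolding is_petri_net_def by (cases t) (auto simp: restr_eq_self)
  then show ?thesis
    unfolding restr_net_def by force
qed

lemma net_step_restr_net_iff:
  "net_step S (restr_net S T) \<alpha> \<beta> \<longleftrightarrow>
     is_config S \<alpha> \<and> (\<exists>t\<in>T. (\<forall>q\<in>S. fst t q \<le> \<alpha> q) \<and> \<beta> = fire_on S t \<alpha>)"
  (is "_ \<longleftrightarrow> ?rhs")
proof
  assume "net_step S (restr_net S T) \<alpha> \<beta>"
  then obtain t \<sigma> where "t \<in> T" "is_config S \<sigma>"
    "\<forall>q. \<alpha> q = restr S (fst t) q + \<sigma> q" "\<forall>q. \<beta> q = restr S (snd t) q + \<sigma> q"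
    unfolding net_step_def restr_net_def fires_def by auto
  then show ?rhs
    unfolding fire_on_def is_config_def restr_def by (auto intro!: bexI[of _ t])
next
  assume ?rhs
  then obtain t where t: "t \<in> T" "is_config S \<alpha>" "\<forall>q\<in>S. fst t q \<le> \<alpha> q" "\<beta> = fire_on S t \<alpha>"
    by blast
  have "fires S (map_prod (restr S) (restr S) t) \<alpha> \<beta>"
    unfolding fires_def
    by (rule exI[of _ "restr S (\<lambda>q. \<alpha> q - fst t q)"])
      (use t in \<open>auto simp: fire_on_def restr_def is_config_def\<close>)
  then show "net_step S (restr_net S T) \<alpha> \<beta>"
    unfolding net_step_def restr_net_def using t(1) by blast
qed

lemma net_step_restr_net_is_config:
  "net_step S (restr_net S T) \<alpha> \<beta> \<Longrightarrow> is_config S \<beta>"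
  unfolding net_step_restr_net_iff fire_on_def using is_config_restr by blast

lemma net_step_restr_net_restr:
  assumes "S' \<subseteq> S" "net_step S (restr_net S T) \<alpha> \<beta>"
  shows "net_step S' (restr_net S' T) (restr S' \<alpha>) (restr S' \<beta>)"
proof -
  obtain t where t: "t \<in> T" "\<forall>q\<in>S. fst t q \<le> \<alpha> q" "\<beta> = fire_on S t \<alpha>"
    using assms(2) unfolding net_step_restr_net_iff by blast
  have "restr S' \<beta> = fire_on S' t (restr S' \<alpha>)"
    using assms(1) t(3) by (auto simp: fire_on_def restr_def fun_eq_iff)
  moreover have "\<forall>q\<in>S'. fst t q \<le> restr S' \<alpha> q"
    using assms(1) t(2) by (auto simp: restr_def)
  ultimately show ?thesis
    unfolding net_step_restr_net_iff using t(1) is_config_restr by blast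
qed

lemma net_step_restr_net_lift:
  assumes "S' \<subseteq> S" "\<forall>t\<in>T. \<forall>q. fst t q \<le> M"
    and "net_step S' (restr_net S' T) \<alpha> \<beta>" "is_config S \<gamma>"
    and "\<forall>q\<in>S'. \<alpha> q \<le> \<gamma> q" "\<forall>q\<in>S - S'. M \<le> \<gamma> q"
  obtains \<delta> where "net_step S (restr_net S T) \<gamma> \<delta>"
    "\<forall>q\<in>S'. \<beta> q \<le> \<delta> q" "\<forall>q\<in>S - S'. \<gamma> q \<le> \<delta> q + M"
proof -
  obtain t where t: "t \<in> T" "\<forall>q\<in>S'. fst t q \<le> \<alpha> q" "\<beta> = fire_on S' t \<alpha>"
    using assms(3) unfolding net_step_restr_net_iff by blast
  have "fst t q \<le> M" for q
    using assms(2) t(1) by blast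
  then have "\<forall>q\<in>S. fst t q \<le> \<gamma> q"
    using assms(5,6) t(2) by (meson DiffI le_trans)
  then have "net_step S (restr_net S T) \<gamma> (fire_on S t \<gamma>)"
    unfolding net_step_restr_net_iff using assms(4) t(1) by blast
  moreover have "\<forall>q\<in>S'. \<beta> q \<le> fire_on S t \<gamma> q"
    using assms(1,5) t(3) by (auto simp: fire_on_def restr_def)
  moreover have "\<forall>q\<in>S - S'. \<gamma> q \<le> fire_on S t \<gamma> q + M"
  proof
    fix q assume "q \<in> S - S'"
    then show "\<gamma> q \<le> fire_on S t \<gamma> q + M"
      using \<open>fst t q \<le> M\<close> by (simp add: fire_on_def restr_def)
  qed
  ultimately show thesis
    by (rule that)
qed

lemma relpowp_map:
  assumes "\<And>x y. R x y \<Longrightarrow> Q (g x) (g y)"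
  shows "(R ^^ n) x y \<Longrightarrow> (Q ^^ n) (g x) (g y)"
proof (induction n arbitrary: y)
  case 0
  then show ?case by simp
next
  case (Suc n)
  then show ?case
    using assms by (auto elim: relpowp_Suc_E intro: relpowp_Suc_I)
qed

lemma relpowp_net_step_restr_net_lift:
  assumes "S' \<subseteq> S" "\<forall>t\<in>T. \<forall>q. fst t q \<le> M"
  shows "(net_step S' (restr_net S' T) ^^ n) \<alpha> \<beta> \<Longrightarrow> is_config S \<gamma> \<Longrightarrow>
    \<forall>q\<in>S'. \<alpha> q \<le> \<gamma> q \<Longrightarrow> \<forall>q\<in>S - S'. M * n \<le> \<gamma> q \<Longrightarrow>
    \<exists>\<delta>. (net_step S (restr_net S T) ^^ n) \<gamma> \<delta> \<and> (\<forall>q\<in>S'. \<beta> q \<le> \<delta> q)"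
proof (induction n arbitrary: \<alpha> \<gamma>)
  case 0
  then show ?case by auto
next
  case (Suc n)
  obtain \<alpha>' where \<alpha>': "net_step S' (restr_net S' T) \<alpha> \<alpha>'"
    "(net_step S' (restr_net S' T) ^^ n) \<alpha>' \<beta>"
    using relpowp_Suc_D2[OF Suc.prems(1)] by blast
  have "\<forall>q\<in>S - S'. M \<le> \<gamma> q"
    using Suc.prems(4) by (metis le_add1 mult_Suc_right order_trans)
  then obtain \<gamma>' where \<gamma>': "net_step S (restr_net S T) \<gamma> \<gamma>'"
    "\<forall>q\<in>S'. \<alpha>' q \<le> \<gamma>' q" "\<forall>q\<in>S - S'. \<gamma> q \<le> \<gamma>' q + M"
    using net_step_restr_net_lift[OF assms \<alpha>'(1) Suc.prems(2,3)] by blast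
  have "\<forall>q\<in>S - S'. M * n \<le> \<gamma>' q"
  proof
    fix q assume "q \<in> S - S'"
    then have "M * Suc n \<le> \<gamma> q" "\<gamma> q \<le> \<gamma>' q + M"
      using Suc.prems(4) \<gamma>'(3) by auto
    then show "M * n \<le> \<gamma>' q" by simp
  qed
  then obtain \<delta> where "(net_step S (restr_net S T) ^^ n) \<gamma>' \<delta>" "\<forall>q\<in>S'. \<beta> q \<le> \<delta> q"
    using Suc.IH[OF \<alpha>'(2) net_step_restr_net_is_config[OF \<gamma>'(1)] \<gamma>'(2)] by blast
  then show ?case
    using \<gamma>'(1) by (blast intro: relpowp_Suc_I2)
qed

definition coverable :: "'p set \<Rightarrow> 'p transition set \<Rightarrow> 'p \<Rightarrow> nat \<Rightarrow> 'p config \<Rightarrow> bool" where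
  "coverable S T p n \<alpha> \<longleftrightarrow> (\<exists>\<beta>. (net_step S (restr_net S T) ^^ n) \<alpha> \<beta> \<and> 0 < \<beta> p)"

lemma coverable_iff_reach:
  assumes "is_petri_net P T"
  shows "(\<exists>n. coverable P T p n \<alpha>) \<longleftrightarrow> (\<exists>\<beta>. reach P T \<alpha> \<beta> \<and> 0 < \<beta> p)"
  unfolding coverable_def restr_net_eq_self[OF assms] reach_eq_rtranclp_net_step rtranclp_power
  by blast

lemma coverable_append:
  "(net_step S (restr_net S T) ^^ i) \<alpha> \<gamma> \<Longrightarrow> coverable S T p m \<gamma> \<Longrightarrow> coverable S T p (i + m) \<alpha>"
  unfolding coverable_def relpowp_add by blast

lemma coverable_restr:
  assumes "S' \<subseteq> S" "p \<in> S'" "coverable S T p n \<alpha>"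
  shows "coverable S' T p n (restr S' \<alpha>)"
proof -
  obtain \<beta> where "(net_step S (restr_net S T) ^^ n) \<alpha> \<beta>" "0 < \<beta> p"
    using assms(3) unfolding coverable_def by blast
  then have "(net_step S' (restr_net S' T) ^^ n) (restr S' \<alpha>) (restr S' \<beta>)" "0 < restr S' \<beta> p"
    using relpowp_map[where R = "net_step S (restr_net S T)" and Q = "net_step S' (restr_net S' T)"
        and g = "restr S'", OF net_step_restr_net_restr[OF assms(1)]] assms(2)
    by (auto simp: restr_def)
  then show ?thesis
    unfolding coverable_def by blast
qed

lemma coverable_lift:
  assumes "S' \<subseteq> S" "\<forall>t\<in>T. \<forall>q. fst t q \<le> M" "is_config S \<gamma>"
    and "\<forall>q\<in>S'. \<alpha> q \<le> \<gamma> q" "\<forall>q\<in>S - S'. M * n \<le> \<gamma> q"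
    and "coverable S' T p n \<alpha>" "p \<in> S'"
  shows "coverable S T p n \<gamma>"
proof -
  obtain \<beta> where "(net_step S' (restr_net S' T) ^^ n) \<alpha> \<beta>" "0 < \<beta> p"
    using assms(6) unfolding coverable_def by blast
  then obtain \<delta> where "(net_step S (restr_net S T) ^^ n) \<gamma> \<delta>" "\<beta> p \<le> \<delta> p"
    using relpowp_net_step_restr_net_lift[OF assms(1,2)] assms(3-5,7) by blast
  then show ?thesis
    unfolding coverable_def using \<open>0 < \<beta> p\<close> by (blast intro: less_le_trans)
qed

lemma relpowp_path_segment:
  assumes "\<forall>k<n. R (f k) (f (Suc k))" "i \<le> j" "j \<le> n"
  shows "(R ^^ (j - i)) (f i) (f j)"
  unfolding relpowp_fun_conv
  by (rule exI[of _ "\<lambda>k. f (i + k)"]) (use assms in auto)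

lemma shortest_path_inj_on:
  assumes path: "\<forall>k<n. R (f k) (f (Suc k))"
    and shortest: "\<forall>m<n. \<not> (R ^^ m) (f 0) (f n)"
  shows "inj_on f {..n}"
proof (rule linorder_inj_onI')
  fix i j assume "i \<in> {..n}" "j \<in> {..n}" "i < j"
  show "f i \<noteq> f j"
  proof
    assume "f i = f j"
    have "(R ^^ i) (f 0) (f i)" "(R ^^ (n - j)) (f j) (f n)"
      using relpowp_path_segment[where R = R and f = f, OF path, of 0 i]
        relpowp_path_segment[where R = R and f = f, OF path, of j n]
        \<open>i < j\<close> \<open>j \<in> {..n}\<close> by auto
    then have "(R ^^ (i + (n - j))) (f 0) (f n)"
      unfolding relpowp_add \<open>f i = f j\<close> by blast
    then show False
      using shortest \<open>i < j\<close> \<open>j \<in> {..n}\<close> by auto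
  qed
qed

lemma obtain_shortest_path:
  assumes "(R ^^ n) x y" "Q y"
  obtains f m where "f 0 = x" "\<forall>k<m. R (f k) (f (Suc k))" "Q (f m)" "inj_on f {..m}"
proof -
  define m where "m = (LEAST m. \<exists>y. (R ^^ m) x y \<and> Q y)"
  obtain y' where y': "(R ^^ m) x y'" "Q y'"
    unfolding m_def using LeastI_ex[of "\<lambda>m. \<exists>y. (R ^^ m) x y \<and> Q y"] assms by blast
  have "\<forall>m'<m. \<not> (R ^^ m') x y'"
    using not_less_Least y'(2) unfolding m_def by blast
  moreover obtain f where "f 0 = x" "f m = y'" "\<forall>k<m. R (f k) (f (Suc k))"
    using y'(1) unfolding relpowp_fun_conv by blast
  ultimately show thesis
    using that shortest_path_inj_on y'(2) by metis
qed

definition configs_below :: "'p set \<Rightarrow> nat \<Rightarrow> 'p config set" where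
  "configs_below S B = {\<alpha>. is_config S \<alpha> \<and> (\<forall>q\<in>S. \<alpha> q < B)}"

lemma card_le_if_inj_on_configs_below:
  assumes "finite S" "inj_on f A" "f ` A \<subseteq> configs_below S B"
  shows "card A \<le> B ^ card S"
proof -
  have "configs_below S B \<subseteq> (\<lambda>g q. if q \<in> S then g q else 0) ` (\<Pi>\<^sub>E q\<in>S. {..<B})"
    (is "_ \<subseteq> ?extend ` _")
  proof
    fix \<alpha> assume "\<alpha> \<in> configs_below S B"
    then have "\<alpha> = ?extend (restrict \<alpha> S)" "restrict \<alpha> S \<in> (\<Pi>\<^sub>E q\<in>S. {..<B})"
      unfolding configs_below_def is_config_def by auto
    then show "\<alpha> \<in> ?extend ` (\<Pi>\<^sub>E q\<in>S. {..<B})"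
      by blast
  qed
  moreover have "finite (\<Pi>\<^sub>E q\<in>S. {..<B})"
    using assms(1) by (simp add: finite_PiE)
  ultimately have "card A \<le> card (?extend ` (\<Pi>\<^sub>E q\<in>S. {..<B}))"
    using assms(2,3) by (meson card_inj_on_le finite_imageI finite_subset order_trans)
  also have "\<dots> \<le> card (\<Pi>\<^sub>E q\<in>S. {..<B})"
    by (rule card_image_le) fact
  also have "\<dots> = B ^ card S"
    using assms(1) by (simp add: card_PiE)
  finally show ?thesis .
qed

lemma inj_configs_short_or_large:
  fixes f :: "nat \<Rightarrow> 'p config"
  assumes "finite S" "inj_on f {..n}" "\<forall>i\<le>n. is_config S (f i)"
  shows "n < B ^ card S \<or> (\<exists>i\<le>n. i \<le> B ^ card S \<and> (\<exists>j\<in>S. B \<le> f i j))"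
proof (cases "\<forall>i\<le>n. f i \<in> configs_below S B")
  case True
  then have "card {..n} \<le> B ^ card S"
    using card_le_if_inj_on_configs_below[OF assms(1,2)] by auto
  then show ?thesis by simp
next
  case False
  define i where "i = (LEAST i. i \<le> n \<and> f i \<notin> configs_below S B)"
  have i: "i \<le> n" "f i \<notin> configs_below S B"
    using LeastI_ex[of "\<lambda>i. i \<le> n \<and> f i \<notin> configs_below S B"] False unfolding i_def by auto
  have "f i' \<in> configs_below S B" if "i' < i" for i'
    using not_less_Least[OF that[unfolded i_def]] that i(1) unfolding i_def by auto
  moreover have "inj_on f {..<i}"
    using assms(2) by (rule inj_on_subset) (use i(1) in auto)
  ultimately have "i \<le> B ^ card S"
    using card_le_if_inj_on_configs_below[OF assms(1), of f "{..<i}"] by auto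
  moreover obtain j where "j \<in> S" "B \<le> f i j"
    using i assms(3) unfolding configs_below_def by (auto simp: not_less)
  ultimately show ?thesis
    using i(1) by blast
qed

lemma shortest_covering_run:
  assumes "is_config S \<alpha>" "coverable S T p n \<alpha>"
  obtains f n' where "f 0 = \<alpha>" "\<forall>i<n'. net_step S (restr_net S T) (f i) (f (Suc i))"
    "0 < f n' p" "inj_on f {..n'}" "\<forall>i\<le>n'. is_config S (f i)"
proof -
  obtain f n' where f: "f 0 = \<alpha>" "\<forall>i<n'. net_step S (restr_net S T) (f i) (f (Suc i))"
    "0 < f n' p" "inj_on f {..n'}"
    using assms(2) unfolding coverable_def by (elim exE conjE obtain_shortest_path) blast
  have "is_config S (f i)" if "i \<le> n'" for i
    using f(1,2) assms(1) that
    by (cases i) (auto intro: net_step_restr_net_is_config[of S T "f (i - 1)"])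
  then show thesis
    using that f by blast
qed

lemma coverable_from_large_place:
  assumes M: "\<forall>t\<in>T. \<forall>q. fst t q \<le> M"
    and "j \<in> S" "p \<in> S - {j}" "is_config S \<gamma>" "M * b < \<gamma> j" "coverable S T p n \<gamma>"
    and short: "\<And>\<beta> n. is_config (S - {j}) \<beta> \<Longrightarrow> coverable (S - {j}) T p n \<beta> \<Longrightarrow>
      \<exists>m\<le>b. coverable (S - {j}) T p m \<beta>"
  shows "\<exists>m\<le>b. coverable S T p m \<gamma>"
proof -
  have "coverable (S - {j}) T p n (restr (S - {j}) \<gamma>)"
    using coverable_restr[OF _ assms(3,6)] by blast
  then obtain m where m: "m \<le> b" "coverable (S - {j}) T p m (restr (S - {j}) \<gamma>)"
    using short[OF is_config_restr] by blast
  have "M * m \<le> \<gamma> j"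
    using assms(5) mult_le_mono2[OF m(1), of M] by linarith
  then have "\<forall>q\<in>S - (S - {j}). M * m \<le> \<gamma> q"
    by blast
  then have "coverable S T p m \<gamma>"
    using coverable_lift[OF _ M assms(4) _ _ m(2) assms(3)] by (auto simp: restr_def)
  then show ?thesis
    using m(1) by blast
qed

fun rackoff_bound :: "nat \<Rightarrow> nat \<Rightarrow> nat" where
  "rackoff_bound M 0 = 0"
| "rackoff_bound M (Suc k) = (M * rackoff_bound M k + 1) ^ Suc k + rackoff_bound M k"

(* The configurations of a shortest covering run are pairwise distinct.  Either all of them stay
   below B = M * rackoff_bound M k + 1, and there are at most B^(k+1) of them, or within B^(k+1)
   steps some place j holds at least B tokens.  From there p is covered, by induction, within
   rackoff_bound M k steps of the net that ignores j, and these steps can be replayed because each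
   of them removes at most M tokens from j. *)
lemma rackoff_step:
  assumes M: "\<forall>t\<in>T. \<forall>q. fst t q \<le> M"
    and S: "finite S" "card S = Suc k" "p \<in> S"
    and \<alpha>: "is_config S \<alpha>" "coverable S T p n \<alpha>"
    and IH: "\<And>S' \<beta> n. S' \<subseteq> S \<Longrightarrow> card S' = k \<Longrightarrow> p \<in> S' \<Longrightarrow> is_config S' \<beta> \<Longrightarrow>
      coverable S' T p n \<beta> \<Longrightarrow> \<exists>m\<le>rackoff_bound M k. coverable S' T p m \<beta>"
  shows "\<exists>m\<le>rackoff_bound M (Suc k). coverable S T p m \<alpha>"
proof -
  define B where "B = M * rackoff_bound M k + 1"
  have bound: "rackoff_bound M (Suc k) = B ^ Suc k + rackoff_bound M k"
    by (simp only: rackoff_bound.simps B_def)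
  obtain f n' where f: "f 0 = \<alpha>" "\<forall>i<n'. net_step S (restr_net S T) (f i) (f (Suc i))"
    "0 < f n' p" "inj_on f {..n'}" "\<forall>i\<le>n'. is_config S (f i)"
    using shortest_covering_run[OF \<alpha>] by blast
  have segment: "(net_step S (restr_net S T) ^^ (j - i)) (f i) (f j)" if "i \<le> j" "j \<le> n'" for i j
    using relpowp_path_segment[where f = f, OF f(2) that] .
  consider "n' < B ^ Suc k" | i j where "i \<le> n'" "i \<le> B ^ Suc k" "j \<in> S" "B \<le> f i j"
    using inj_configs_short_or_large[OF S(1) f(4,5), of B] S(2) by auto
  then show ?thesis
  proof cases
    case 1
    moreover have "coverable S T p n' \<alpha>"
      unfolding coverable_def using segment[of 0 n'] f(1,3) by auto
    ultimately show ?thesis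
      unfolding bound by (intro exI[of _ n']) simp
  next
    case (2 i j)
    have "\<exists>m\<le>rackoff_bound M k. coverable S T p m (f i)"
    proof (cases "p = j")
      case True
      then show ?thesis
        using 2(4) unfolding coverable_def B_def by (intro exI[of _ 0]) auto
    next
      case False
      have "S - {j} \<subseteq> S" "card (S - {j}) = k" "p \<in> S - {j}"
        using S 2(3) False by auto
      moreover have "coverable S T p (n' - i) (f i)"
        unfolding coverable_def using segment[of i n'] 2(1) f(3) by auto
      ultimately show ?thesis
        using coverable_from_large_place[OF M 2(3) _ f(5)[rule_format, OF 2(1)]] IH 2(4)
        unfolding B_def by auto
    qed
    then obtain m where "m \<le> rackoff_bound M k" "coverable S T p (i + m) \<alpha>"
      using coverable_append[OF segment[of 0 i, unfolded f(1) diff_zero]] 2(1) by blast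
    moreover have "i + m \<le> rackoff_bound M (Suc k)"
      using 2(2) \<open>m \<le> rackoff_bound M k\<close> unfolding bound by linarith
    ultimately show ?thesis
      by blast
  qed
qed

lemma coverable_within_rackoff_bound:
  assumes "\<forall>t\<in>T. \<forall>q. fst t q \<le> M"
  shows "finite S \<Longrightarrow> p \<in> S \<Longrightarrow> is_config S \<alpha> \<Longrightarrow> coverable S T p n \<alpha> \<Longrightarrow>
    \<exists>m\<le>rackoff_bound M (card S). coverable S T p m \<alpha>"
proof (induction "card S" arbitrary: S \<alpha> n)
  case 0
  then show ?case by simp
next
  case (Suc k)
  have IH: "\<exists>m\<le>rackoff_bound M k. coverable S' T p m \<beta>"
    if "S' \<subseteq> S" "card S' = k" "p \<in> S'" "is_config S' \<beta>" "coverable S' T p n' \<beta>" for S' \<beta> n'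
    using Suc.hyps(1)[OF that(2)[symmetric] finite_subset[OF that(1) Suc.prems(1)] that(3-5)]
    unfolding that(2) .
  show ?case
    using rackoff_step[OF assms Suc.prems(1) Suc.hyps(2)[symmetric] Suc.prems(2-4) IH]
    unfolding Suc.hyps(2)[symmetric] .
qed

lemma rackoff_bound_mono: "k \<le> l \<Longrightarrow> rackoff_bound M k \<le> rackoff_bound M l"
  by (rule lift_Suc_mono_le[of "rackoff_bound M"]) auto

lemma rackoff_bound_less:
  assumes "1 \<le> M"
  shows "rackoff_bound M k < (1 + M) ^ (k ^ k)"
proof (induction k)
  case 0
  then show ?case by simp
next
  case (Suc k)
  show ?case
  proof (cases "k = 0")
    case True
    then show ?thesis using assms by simp
  next
    case False
    define a where "a = 1 + M"
    define X where "X = a ^ (k ^ k)"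
    have "M * (rackoff_bound M k + 1) \<le> M * X"
      using Suc.IH unfolding X_def a_def by (intro mult_le_mono2) simp
    then have "M * rackoff_bound M k + 1 \<le> M * X"
      using assms by simp
    then have "rackoff_bound M (Suc k) < (M * X) ^ Suc k + X"
      using Suc.IH power_mono[of _ _ "Suc k"] unfolding X_def a_def by fastforce
    also have "\<dots> \<le> (a * X) ^ k * (M * X) + (a * X) ^ k * X"
    proof -
      have "0 < X"
        unfolding X_def a_def by simp
      then have "1 \<le> a * X"
        unfolding a_def by simp
      then have "(M * X) ^ k \<le> (a * X) ^ k" "1 \<le> (a * X) ^ k"
        unfolding a_def by (simp_all add: power_mono)
      then show ?thesis
        by (simp add: add_mono mult_le_mono1)
    qed
    also have "\<dots> = (a * X) ^ Suc k"
      unfolding a_def by (simp add: algebra_simps)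
    also have "\<dots> = a ^ (Suc k + k ^ k * Suc k)"
      unfolding X_def by (simp only: power_mult_distrib power_mult power_add)
    also have "\<dots> = a ^ (Suc k * (1 + k ^ k))"
      by (simp add: algebra_simps)
    also have "\<dots> \<le> a ^ (Suc k ^ Suc k)"
    proof -
      have "1 + k ^ k \<le> Suc k ^ k"
        using False by (simp add: power_strict_mono Suc_le_eq)
      then have "Suc k * (1 + k ^ k) \<le> Suc k ^ Suc k"
        unfolding power_Suc by (rule mult_le_mono2)
      then show ?thesis
        unfolding a_def by (rule power_increasing) simp
    qed
    finally show ?thesis
      unfolding a_def .
  qed
qed

lemma mult_rackoff_bound_le:
  assumes "k \<le> l"
  shows "M * rackoff_bound M k \<le> M * (1 + M) ^ (l ^ l)"
proof (cases "M = 0")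
  case False
  then have "rackoff_bound M k < (1 + M) ^ (l ^ l)"
    using rackoff_bound_mono[OF assms, of M] rackoff_bound_less[of M l] by simp
  then show ?thesis by simp
qed simp

lemma fst_le_norm_inf:
  assumes "finite P" "is_petri_net P T"
  shows "\<forall>t\<in>T. \<forall>q. fst t q \<le> norm_inf P T"
proof (intro ballI allI)
  fix t q assume "t \<in> T"
  show "fst t q \<le> norm_inf P T"
  proof (cases "q \<in> P")
    case True
    have "finite T"
      using assms(2) unfolding is_petri_net_def by simp
    then have "finite {fst t p | t p. t \<in> T \<and> p \<in> P}" "finite {snd t p | t p. t \<in> T \<and> p \<in> P}"
      using assms(1) by (auto intro!: finite_image_set2 simp del: split_paired_Ex)
    then show ?thesis
      unfolding norm_inf_def using \<open>t \<in> T\<close> True by (intro Max_ge) blast+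
  next
    case False
    then show ?thesis
      using assms(2) \<open>t \<in> T\<close> unfolding is_petri_net_def is_config_def by simp
  qed
qed

lemma reach_cover_of_dominating:
  assumes "finite P" "is_petri_net P T" "R \<subseteq> P" "p \<in> R"
    and "is_config P \<rho>" "\<forall>q\<in>R. \<alpha> q \<le> \<rho> q"
    and "\<forall>q\<in>P - R. norm_inf P T * (1 + norm_inf P T) ^ (card P ^ card P) \<le> \<rho> q"
    and "reach P T \<alpha> \<beta>" "0 < \<beta> p"
  shows "\<exists>\<gamma>. reach P T \<rho> \<gamma> \<and> 0 < \<gamma> p"
proof -
  let ?M = "norm_inf P T"
  have M: "\<forall>t\<in>T. \<forall>q. fst t q \<le> ?M"
    using fst_le_norm_inf[OF assms(1,2)] .
  have "finite R"
    using assms(1,3) by (rule finite_subset[rotated])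
  obtain n where "coverable P T p n \<alpha>"
    using coverable_iff_reach[OF assms(2)] assms(8,9) by blast
  then have "coverable R T p n (restr R \<alpha>)"
    by (rule coverable_restr[OF assms(3,4)])
  then obtain m where m: "m \<le> rackoff_bound ?M (card R)" "coverable R T p m (restr R \<alpha>)"
    using coverable_within_rackoff_bound[OF M \<open>finite R\<close> assms(4) is_config_restr] by blast
  have "?M * m \<le> ?M * (1 + ?M) ^ (card P ^ card P)"
    using m(1) mult_rackoff_bound_le[OF card_mono[OF assms(1,3)], of ?M]
    by (meson le_trans mult_le_mono2)
  then have "\<forall>q\<in>P - R. ?M * m \<le> \<rho> q"
    using assms(7) le_trans by blast
  moreover have "\<forall>q\<in>R. restr R \<alpha> q \<le> \<rho> q"
    using assms(6) by (simp add: restr_def)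
  ultimately have "coverable P T p m \<rho>"
    using coverable_lift[OF assms(3) M assms(5) _ _ m(2) assms(4)] by blast
  then show ?thesis
    using coverable_iff_reach[OF assms(2)] by blast
qed

theorem lemma5p4:
  fixes P :: "'p set" and T :: "'p transition set" and F :: "'p set"
    and \<rho> :: "'p config" and h :: nat and R :: "'p set"
  assumes "finite P"
    and "is_petri_net P T"
    and "F \<subseteq> P"
    and "is_config P \<rho>"
    and "stabilized P T F \<rho>"
    and "h > 0"
    and "h \<ge> norm_inf P T * (1 + norm_inf P T) ^ (card P ^ card P)"
    and "R = {p \<in> P. \<rho> p < h}"
  shows "\<forall>\<alpha>. is_config P \<alpha> \<and> restr R \<alpha> \<le> restr R \<rho> \<longrightarrow> stabilized P T F \<alpha>"
proof (intro allI impI)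
  fix \<alpha> assume \<alpha>: "is_config P \<alpha> \<and> restr R \<alpha> \<le> restr R \<rho>"
  show "stabilized P T F \<alpha>"
    unfolding stabilized_def
  proof (intro allI impI ballI)
    fix \<beta> p assume "reach P T \<alpha> \<beta>" "p \<in> P - F"
    have "\<rho> p = 0"
      using assms(5) \<open>p \<in> P - F\<close> unfolding stabilized_def reach_def by blast
    then have "p \<in> R"
      using \<open>p \<in> P - F\<close> assms(6,8) by simp
    have "R \<subseteq> P"
      using assms(8) by blast
    moreover have "\<forall>q\<in>R. \<alpha> q \<le> \<rho> q"
      using \<alpha> unfolding le_fun_def restr_def by (metis (full_types))
    moreover have "\<forall>q\<in>P - R. norm_inf P T * (1 + norm_inf P T) ^ (card P ^ card P) \<le> \<rho> q"
      using assms(7,8) by auto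
    moreover have "\<nexists>\<gamma>. reach P T \<rho> \<gamma> \<and> 0 < \<gamma> p"
      using assms(5) \<open>p \<in> P - F\<close> unfolding stabilized_def by auto
    ultimately show "\<beta> p = 0"
      using reach_cover_of_dominating[OF assms(1,2) _ \<open>p \<in> R\<close> assms(4) _ _ \<open>reach P T \<alpha> \<beta>\<close>]
      by blast
  qed
qed

end
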